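(* Let $\rho$ be a left-c.e. semi-measure and let $\Phi$ be a Turing functional with $\lambda_\Phi=\rho$. Then for every $X\in\mathsf{W2R}\cap\mathrm{dom}(\Phi)$, $\Phi(X)\in\mathsf{W2R}_\rho$.
   Context: $2^{<\omega}$ is the set of finite binary strings, $\preceq$ the prefix order, $\varepsilon$ the empty string, $[\![\sigma]\!]=\{X\in2^\omega:\sigma\preceq X\}$, $[\![S]\!]=\bigcup_{\sigma\in S}[\![\sigma]\!]$; $\lambda$ is the uniform measure. $\mathsf{W2R}$ is the set of weakly 2-random sequences: $X$ such that $X\notin\bigcap_i\mathcal U_i$ for every uniformly effectively open sequence $(\mathcal U_i)$ of subsets of $2^\omega$ with $\lim_i\lambda(\mathcal U_i)=0$. A Turing functional $\Phi$ is a c.e. set of pairs $(\sigma,\tau)$ of strings such that whenever $(\sigma,\tau),(\sigma',\tau')\in\Phi$ and $\sigma\preceq\sigma'$, $\tau,\tau'$ are comparable; $\Phi^X$ is the maximal finite or infinite sequence extending every $\tau$ with $(\sigma,\tau)\in\Phi$ for some $\sigma\preceq X$; $\mathrm{dom}(\Phi)=\{X:\Phi^X\text{ infinite}\}$, $\Phi(X)=\Phi^X$ there, and $\lambda_\Phi(\sigma)=\lambda(\{X:\Phi^X\succeq\sigma\})$. A semi-measure is $\rho:2^{<\omega}\to[0,1]$ with $\rho(\varepsilon)=1$ and $\rho(\sigma)\ge\rho(\sigma0)+\rho(\sigma1)$; left-c.e. means uniformly approximable from below by computable non-decreasing rational sequences. For $E\subseteq2^{<\omega}$, $\rho(E)=\sum_{\sigma\in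 E}\rho(\sigma)$. A generalized $\rho$-Martin-Löf test is a uniformly c.e. sequence $(U_i)$ of subsets of $2^{<\omega}$ with $\lim_i\rho(U_i)=0$; $X\in\mathsf{W2R}_\rho$ iff $X\notin\bigcap_i[\![U_i]\!]$ for every such test. *)

theory Defs
  imports "HOL-Probability.Probability" "HOL-Library.Nat_Bijection" "HOL-Library.Sublist"
begin

inductive prim :: "(nat \<Rightarrow> nat) \<Rightarrow> bool" where
  prim_zero: "prim (\<lambda>_. 0)"
| prim_suc: "prim Suc"
| prim_id: "prim (\<lambda>x. x)"
| prim_fst: "prim (\<lambda>x. fst (prod_decode x))"
| prim_snd: "prim (\<lambda>x. snd (prod_decode x))"
| prim_pair: "prim f \<Longrightarrow> prim g \<Longrightarrow> prim (\<lambda>x. prod_encode (f x, g x))"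
| prim_comp: "prim f \<Longrightarrow> prim g \<Longrightarrow> prim (\<lambda>x. f (g x))"
| prim_rec: "prim f \<Longrightarrow> prim g \<Longrightarrow>
    prim (\<lambda>p. rec_nat (f (fst (prod_decode p)))
                 (\<lambda>k r. g (prod_encode (fst (prod_decode p), prod_encode (k, r))))
                 (snd (prod_decode p)))"

definition ce_nat :: "nat set \<Rightarrow> bool" where
  "ce_nat A \<longleftrightarrow> (\<exists>R. prim R \<and> A = {x. \<exists>n. R (prod_encode (x, n)) \<noteq> 0})"

type_synonym str = "bool list"      \<comment> \<open>finite binary strings, first bit first\<close>
type_synonym seq = "nat \<Rightarrow> bool"

text \<open>Bijective coding of finite binary strings by naturals.\<close>
fun code_str :: "str \<Rightarrow> nat" where
  "code_str [] = 0"
| "code_str (b # s) = 2 * code_str s + (if b then 2 else 1)"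

definition rat_of_code :: "nat \<Rightarrow> real" where
  "rat_of_code n = of_int (int_decode (fst (prod_decode n))) / real (snd (prod_decode n) + 1)"

definition ce_str_set :: "str set \<Rightarrow> bool" where
  "ce_str_set S \<longleftrightarrow> ce_nat (code_str ` S)"

definition ce_str_pairs :: "(str \<times> str) set \<Rightarrow> bool" where
  "ce_str_pairs S \<longleftrightarrow> ce_nat ((\<lambda>(s, t). prod_encode (code_str s, code_str t)) ` S)"

definition unif_ce :: "(nat \<Rightarrow> str set) \<Rightarrow> bool" where
  "unif_ce U \<longleftrightarrow> ce_nat {prod_encode (i, code_str s) | i s. s \<in> U i}"

definition sprefix :: "str \<Rightarrow> seq \<Rightarrow> bool" where
  "sprefix s X \<longleftrightarrow> (\<forall>i < length s. s ! i = X i)"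

definition cyl :: "str set \<Rightarrow> seq set" where
  "cyl S = {X. \<exists>s\<in>S. sprefix s X}"

definition unif :: "seq measure" where
  "unif = (\<Pi>\<^sub>M i\<in>(UNIV::nat set). measure_pmf (bernoulli_pmf (1/2)))"

definition W2R :: "seq set" where
  "W2R = {X. \<forall>U. unif_ce U \<and> ((\<lambda>i. measure unif (cyl (U i))) \<longlonglongrightarrow> 0)
                 \<longrightarrow> X \<notin> (\<Inter>i. cyl (U i))}"

definition semimeasure :: "(str \<Rightarrow> real) \<Rightarrow> bool" where
  "semimeasure \<rho> \<longleftrightarrow> (\<forall>s. 0 \<le> \<rho> s \<and> \<rho> s \<le> 1) \<and> \<rho> [] = 1 \<and>
      (\<forall>s. \<rho> s \<ge> \<rho> (s @ [False]) + \<rho> (s @ [True]))"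

definition left_ce :: "(str \<Rightarrow> real) \<Rightarrow> bool" where
  "left_ce \<rho> \<longleftrightarrow> (\<exists>q. prim q \<and>
     (\<forall>s. mono (\<lambda>n. rat_of_code (q (prod_encode (code_str s, n)))) \<and>
          (\<lambda>n. rat_of_code (q (prod_encode (code_str s, n)))) \<longlonglongrightarrow> \<rho> s))"

definition rho_set :: "(str \<Rightarrow> real) \<Rightarrow> str set \<Rightarrow> ennreal" where
  "rho_set \<rho> E = (\<integral>\<^sup>+ s. ennreal (\<rho> s) \<partial>count_space E)"

definition W2R_rho :: "(str \<Rightarrow> real) \<Rightarrow> seq set" where
  "W2R_rho \<rho> = {X. \<forall>U. unif_ce U \<and> ((\<lambda>i. rho_set \<rho> (U i)) \<longlonglongrightarrow> 0)
                 \<longrightarrow> X \<notin> (\<Inter>i. cyl (U i))}"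

definition turing_functional :: "(str \<times> str) set \<Rightarrow> bool" where
  "turing_functional \<Phi> \<longleftrightarrow> ce_str_pairs \<Phi> \<and>
     (\<forall>s t s' t'. (s, t) \<in> \<Phi> \<longrightarrow> (s', t') \<in> \<Phi> \<longrightarrow> prefix s s' \<longrightarrow>
        prefix t t' \<or> prefix t' t)"

text \<open>The finite outputs produced on oracle X (together with the empty string); Phi^X is the
  union of this chain of strings.\<close>
definition outs :: "(str \<times> str) set \<Rightarrow> seq \<Rightarrow> str set" where
  "outs \<Phi> X = insert [] {t. \<exists>s. (s, t) \<in> \<Phi> \<and> sprefix s X}"

definition out_ext :: "(str \<times> str) set \<Rightarrow> seq \<Rightarrow> str \<Rightarrow> bool" where
  "out_ext \<Phi> X s \<longleftrightarrow> (\<exists>t\<in>outs \<Phi> X. prefix s t)"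

definition dom_TF :: "(str \<times> str) set \<Rightarrow> seq set" where
  "dom_TF \<Phi> = {X. \<forall>n. \<exists>t\<in>outs \<Phi> X. n \<le> length t}"

definition apply_TF :: "(str \<times> str) set \<Rightarrow> seq \<Rightarrow> seq" where
  "apply_TF \<Phi> X = (SOME Y. \<forall>t\<in>outs \<Phi> X. sprefix t Y)"

definition lambda_Phi :: "(str \<times> str) set \<Rightarrow> str \<Rightarrow> real" where
  "lambda_Phi \<Phi> s = measure unif {X. out_ext \<Phi> X s}"

end

theory Submission
  imports Defs
begin

text \<open>A test \<open>(U\<^sub>i)\<close> for \<open>\<Phi>(X)\<close> pulls back to the sets \<open>W\<^sub>i\<close> of oracle strings on which
  \<open>\<Phi>\<close> outputs an extension of some \<open>\<sigma> \<in> U\<^sub>i\<close>. These are uniformly c.e., \<open>X\<close> lies in every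
  \<open>[[W\<^sub>i]]\<close>, and by countable subadditivity \<open>\<lambda>[[W\<^sub>i]] \<le> \<Sum>\<^sub>\<sigma>\<^sub>\<in>\<^sub>U\<^sub>i \<lambda>\<^sub>\<Phi>(\<sigma>) = \<rho>(U\<^sub>i) \<rightarrow> 0\<close>,
  contradicting weak 2-randomness of \<open>X\<close>. Neither the semi-measure property nor left-c.e.-ness
  of \<open>\<rho>\<close> is needed beyond \<open>\<lambda>\<^sub>\<Phi> = \<rho>\<close>.\<close>

section \<open>Closure properties of primitive recursive functions\<close>

lemma prim_const: "prim (\<lambda>_. c)"
proof (induct c)
  case 0
  show ?case by (rule prim_zero)
next
  case (Suc c)
  from prim_comp[OF prim_suc Suc] show ?case by simp
qed

lemma prim_fst_comp: "prim f \<Longrightarrow> prim (\<lambda>x. fst (prod_decode (f x)))"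
  using prim_comp[OF prim_fst] by blast

lemma prim_snd_comp: "prim f \<Longrightarrow> prim (\<lambda>x. snd (prod_decode (f x)))"
  using prim_comp[OF prim_snd] by blast

lemma prim_comp2:
  assumes "prim (\<lambda>p. F (fst (prod_decode p)) (snd (prod_decode p)))" "prim f" "prim g"
  shows "prim (\<lambda>x. F (f x) (g x))"
  using prim_comp[OF assms(1) prim_pair[OF assms(2,3)]] by simp

lemma prim_unary:
  assumes "prim (\<lambda>p. F (snd (prod_decode p)))"
  shows "prim F"
  using prim_comp[OF assms prim_pair[OF prim_zero prim_id]] by simp

lemma prim_add:
  assumes "prim f" "prim g"
  shows "prim (\<lambda>x. f x + g x)"
proof -
  have step: "prim (\<lambda>q. Suc (snd (prod_decode (snd (prod_decode q)))))"
    by (intro prim_comp[OF prim_suc] prim_snd_comp prim_snd)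
  have "rec_nat x (\<lambda>k r. Suc r) y = x + y" for x y :: nat
    by (induct y) auto
  then have "prim (\<lambda>p. fst (prod_decode p) + snd (prod_decode p))"
    using prim_rec[OF prim_id step] by simp
  from prim_comp2[OF this assms] show ?thesis .
qed

lemma prim_pred: "prim (\<lambda>y. y - 1)"
proof (rule prim_unary)
  have step: "prim (\<lambda>q. fst (prod_decode (snd (prod_decode q))))"
    by (intro prim_fst_comp prim_snd)
  have "rec_nat 0 (\<lambda>k r. k) y = y - 1" for y :: nat
    by (induct y) auto
  then show "prim (\<lambda>p. snd (prod_decode p) - 1)"
    using prim_rec[OF prim_zero step] by simp
qed

lemma prim_diff:
  assumes "prim f" "prim g"
  shows "prim (\<lambda>x. f x - g x)"
proof -
  have step: "prim (\<lambda>q. snd (prod_decode (snd (prod_decode q))) - 1)"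
    by (intro prim_comp[OF prim_pred] prim_snd_comp prim_snd)
  have "rec_nat x (\<lambda>k r. r - Suc 0) y = x - y" for x y :: nat
    by (induct y) auto
  then have "prim (\<lambda>p. fst (prod_decode p) - snd (prod_decode p))"
    using prim_rec[OF prim_id step] by simp
  from prim_comp2[OF this assms] show ?thesis .
qed

lemma prim_mult:
  assumes "prim f" "prim g"
  shows "prim (\<lambda>x. f x * g x)"
proof -
  have step: "prim (\<lambda>q. snd (prod_decode (snd (prod_decode q))) + fst (prod_decode q))"
    by (rule prim_add[OF prim_snd_comp[OF prim_snd] prim_fst])
  have "rec_nat 0 (\<lambda>k r. r + x) y = x * y" for x y :: nat
    by (induct y) auto
  then have "prim (\<lambda>p. fst (prod_decode p) * snd (prod_decode p))"
    using prim_rec[OF prim_zero step] by simp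
  from prim_comp2[OF this assms] show ?thesis .
qed

lemma prim_power2: "prim f \<Longrightarrow> prim (\<lambda>x. 2 ^ f x)"
proof (rule prim_comp[of "\<lambda>y. 2 ^ y"], rule prim_unary)
  have step: "prim (\<lambda>q. snd (prod_decode (snd (prod_decode q))) + snd (prod_decode (snd (prod_decode q))))"
    by (rule prim_add; intro prim_snd_comp prim_snd)
  have "rec_nat (Suc 0) (\<lambda>k r. r + r) y = (2::nat) ^ y" for y
    by (induct y) auto
  then show "prim (\<lambda>p. 2 ^ snd (prod_decode p))"
    using prim_rec[OF prim_const[of 1] step] by simp
qed

lemma code_str_bounds: "2 ^ length s \<le> code_str s + 1 \<and> code_str s + 2 \<le> 2 ^ Suc (length s)"
  by (induct s) auto

lemma code_str_append: "code_str (s @ r) = code_str s + 2 ^ length s * code_str r"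
  by (induct s) (auto simp: algebra_simps)

lemma inj_code_str: "inj code_str"
proof (rule injI)
  show "code_str s = code_str t \<Longrightarrow> s = t" for s t
  proof (induct s arbitrary: t)
    case Nil
    then show ?case by (cases t) (auto split: if_splits)
  next
    case (Cons b s)
    then show ?case by (cases t; auto split: if_splits; presburger)
  qed
qed

lemma surj_code_str: "surj code_str"
proof -
  have "\<exists>s. code_str s = n" for n
  proof (induct n rule: less_induct)
    case (less n)
    consider "n = 0" | m where "n = 2 * m + 1" | m where "n = 2 * m + 2"
    proof -
      have "n = 0 \<or> (\<exists>m. n = 2 * m + 1) \<or> (\<exists>m. n = 2 * m + 2)" by presburger
      then show thesis using that by blast
    qed
    then show ?case
    proof cases
      case 1
      then show ?thesis by (intro exI[of _ "[]"]) auto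
    next
      case (2 m)
      with less obtain s where "code_str s = m" by fastforce
      with 2 show ?thesis by (intro exI[of _ "False # s"]) auto
    next
      case (3 m)
      with less obtain s where "code_str s = m" by fastforce
      with 3 show ?thesis by (intro exI[of _ "True # s"]) auto
    qed
  qed
  then show ?thesis by (metis surjI)
qed

lemma length_eq_iff_code_str_bounds:
  "L = length s \<longleftrightarrow> 2 ^ L \<le> code_str s + 1 \<and> code_str s + 2 \<le> 2 ^ L + (2::nat) ^ L"
proof
  assume "2 ^ L \<le> code_str s + 1 \<and> code_str s + 2 \<le> 2 ^ L + (2::nat) ^ L"
  then have "(2::nat) ^ L < 2 ^ Suc (length s)" "(2::nat) ^ length s < 2 ^ Suc L"
    using code_str_bounds[of s] by auto
  then have "L < Suc (length s)" "length s < Suc L"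
    by (simp_all only: power_strict_increasing_iff[of 2] one_less_numeral_iff semiring_norm(76))
  then show "L = length s" by simp
qed (use code_str_bounds[of s] in auto)

lemma prefix_iff_code_str:
  "prefix \<sigma> t \<longleftrightarrow> (\<exists>r. code_str t = code_str \<sigma> + 2 ^ length \<sigma> * code_str r)"
  by (metis code_str_append inj_code_str injD prefix_def)

section \<open>Pulling sets of strings back along a Turing functional\<close>

definition TF_preimage :: "(str \<times> str) set \<Rightarrow> str set \<Rightarrow> str set" where
  "TF_preimage \<Phi> S = {s. \<exists>t \<sigma>. (s, t) \<in> \<Phi> \<and> \<sigma> \<in> S \<and> prefix \<sigma> t}"

lemma ce_natE:
  assumes "ce_nat A"
  obtains R where "prim R" "\<And>x. x \<in> A \<longleftrightarrow> (\<exists>n. R (prod_encode (x, n)) \<noteq> 0)"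
  using assms unfolding ce_nat_def by blast

lemma prod_encode_cases:
  obtains a b where "n = prod_encode (a, b)"
  by (metis prod_decode_inverse surj_pair)

lemma code_str_cases:
  obtains s where "n = code_str s"
  by (metis surj_code_str surjD)

lemma ce_str_pairsE:
  assumes "ce_str_pairs \<Phi>"
  obtains R where "prim R"
    "\<And>s t. (s, t) \<in> \<Phi> \<longleftrightarrow> (\<exists>m. R (prod_encode (prod_encode (code_str s, code_str t), m)) \<noteq> 0)"
proof -
  have inj_pair: "inj (\<lambda>(s, t). prod_encode (code_str s, code_str t))"
    using inj_code_str by (auto simp: inj_def prod_encode_eq)
  obtain R where prim_R: "prim R" and R_iff: "\<And>x. x \<in> (\<lambda>(s, t). prod_encode (code_str s, code_str t)) ` \<Phi>
      \<longleftrightarrow> (\<exists>n. R (prod_encode (x, n)) \<noteq> 0)"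
    using assms unfolding ce_str_pairs_def by (rule ce_natE) blast
  have "(s, t) \<in> \<Phi> \<longleftrightarrow> (\<exists>m. R (prod_encode (prod_encode (code_str s, code_str t), m)) \<noteq> 0)"
    for s t
    using R_iff[of "prod_encode (code_str s, code_str t)"] inj_image_mem_iff[OF inj_pair, of "(s, t)"]
    by simp
  with prim_R show thesis by (rule that)
qed

lemma unif_ceE:
  assumes "unif_ce U"
  obtains R where "prim R"
    "\<And>i \<sigma>. \<sigma> \<in> U i \<longleftrightarrow> (\<exists>m. R (prod_encode (prod_encode (i, code_str \<sigma>), m)) \<noteq> 0)"
proof -
  obtain R where prim_R: "prim R" and R_iff: "\<And>x. x \<in> {prod_encode (i, code_str s) | i s. s \<in> U i}
      \<longleftrightarrow> (\<exists>n. R (prod_encode (x, n)) \<noteq> 0)"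
    using assms unfolding unif_ce_def by (rule ce_natE) blast
  have "\<sigma> \<in> U i \<longleftrightarrow> (\<exists>m. R (prod_encode (prod_encode (i, code_str \<sigma>), m)) \<noteq> 0)" for i \<sigma>
    using R_iff[of "prod_encode (i, code_str \<sigma>)"] inj_code_str by (auto simp: prod_encode_eq inj_eq)
  with prim_R show thesis by (rule that)
qed

text \<open>A witness for \<open>\<langle>i, a\<rangle>\<close> encodes \<open>\<langle>ct, cs, m1, m2, r, L\<rangle>\<close>: the codes of \<open>t\<close> and \<open>\<sigma>\<close>,
  enumeration stages for \<open>(s, t) \<in> \<Phi>\<close> and \<open>\<sigma> \<in> U i\<close>, and the code of \<open>r\<close> and the length \<open>L\<close>
  of \<open>\<sigma>\<close> in \<open>t = \<sigma> @ r\<close>. Each factor \<open>1 - (u - v + (v - u))\<close> or \<open>1 - (u - v)\<close> tests an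
  equation or inequality.\<close>

lemma prim_TF_preimage_checker:
  assumes R1: "prim R1" and R2: "prim R2"
  obtains R where "prim R"
    "\<And>i a ct cs m1 m2 r L. R (prod_encode (prod_encode (i, a), prod_encode (ct, prod_encode (cs,
        prod_encode (m1, prod_encode (m2, prod_encode (r, L))))))) \<noteq> 0
     \<longleftrightarrow> R1 (prod_encode (prod_encode (a, ct), m1)) \<noteq> 0 \<and> R2 (prod_encode (prod_encode (i, cs), m2)) \<noteq> 0
        \<and> ct = cs + 2 ^ L * r \<and> 2 ^ L \<le> cs + 1 \<and> cs + 2 \<le> 2 ^ L + 2 ^ L"
proof -
  let ?x = "\<lambda>p. fst (prod_decode p)" and ?n = "\<lambda>p. snd (prod_decode p)"
  let ?i = "\<lambda>p. fst (prod_decode (?x p))" and ?a = "\<lambda>p. snd (prod_decode (?x p))"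
  let ?ct = "\<lambda>p. fst (prod_decode (?n p))" and ?n1 = "\<lambda>p. snd (prod_decode (?n p))"
  let ?cs = "\<lambda>p. fst (prod_decode (?n1 p))" and ?n2 = "\<lambda>p. snd (prod_decode (?n1 p))"
  let ?m1 = "\<lambda>p. fst (prod_decode (?n2 p))" and ?n3 = "\<lambda>p. snd (prod_decode (?n2 p))"
  let ?m2 = "\<lambda>p. fst (prod_decode (?n3 p))" and ?n4 = "\<lambda>p. snd (prod_decode (?n3 p))"
  let ?r = "\<lambda>p. fst (prod_decode (?n4 p))" and ?L = "\<lambda>p. snd (prod_decode (?n4 p))"
  define R where "R = (\<lambda>p. R1 (prod_encode (prod_encode (?a p, ?ct p), ?m1 p))
     * R2 (prod_encode (prod_encode (?i p, ?cs p), ?m2 p))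
     * (1 - ((?ct p - (?cs p + 2 ^ ?L p * ?r p)) + ((?cs p + 2 ^ ?L p * ?r p) - ?ct p)))
     * (1 - (2 ^ ?L p - (?cs p + 1))) * (1 - ((?cs p + 2) - (2 ^ ?L p + 2 ^ ?L p))))"
  have "prim R" unfolding R_def
    by (intro prim_mult prim_comp[OF R1] prim_comp[OF R2] prim_diff prim_add prim_power2
          prim_const prim_pair prim_fst_comp prim_snd_comp prim_id)
  then show thesis
    by (rule that) (auto simp: R_def)
qed

lemma unif_ce_TF_preimage:
  assumes "unif_ce U" and "ce_str_pairs \<Phi>"
  shows "unif_ce (\<lambda>i. TF_preimage \<Phi> (U i))"
proof -
  obtain R1 where R1: "prim R1" and in_\<Phi>:
    "\<And>s t. (s, t) \<in> \<Phi> \<longleftrightarrow> (\<exists>m. R1 (prod_encode (prod_encode (code_str s, code_str t), m)) \<noteq> 0)"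
    using assms(2) by (rule ce_str_pairsE) blast
  obtain R2 where R2: "prim R2" and in_U:
    "\<And>i \<sigma>. \<sigma> \<in> U i \<longleftrightarrow> (\<exists>m. R2 (prod_encode (prod_encode (i, code_str \<sigma>), m)) \<noteq> 0)"
    using assms(1) by (rule unif_ceE) blast
  obtain R where prim_R: "prim R" and R_iff:
    "\<And>i a ct cs m1 m2 r L. R (prod_encode (prod_encode (i, a), prod_encode (ct, prod_encode (cs,
        prod_encode (m1, prod_encode (m2, prod_encode (r, L))))))) \<noteq> 0
     \<longleftrightarrow> R1 (prod_encode (prod_encode (a, ct), m1)) \<noteq> 0 \<and> R2 (prod_encode (prod_encode (i, cs), m2)) \<noteq> 0
        \<and> ct = cs + 2 ^ L * r \<and> 2 ^ L \<le> cs + 1 \<and> cs + 2 \<le> 2 ^ L + 2 ^ L"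
    using prim_TF_preimage_checker[OF R1 R2] by blast
  have preimage_iff: "s \<in> TF_preimage \<Phi> (U i) \<longleftrightarrow> (\<exists>n. R (prod_encode (prod_encode (i, code_str s), n)) \<noteq> 0)"
    for i s
  proof
    assume "s \<in> TF_preimage \<Phi> (U i)"
    then obtain t \<sigma> r where "(s, t) \<in> \<Phi>" "\<sigma> \<in> U i" "t = \<sigma> @ r"
      unfolding TF_preimage_def prefix_def by blast
    moreover from this obtain m1 m2
      where "R1 (prod_encode (prod_encode (code_str s, code_str t), m1)) \<noteq> 0"
        and "R2 (prod_encode (prod_encode (i, code_str \<sigma>), m2)) \<noteq> 0"
      using in_\<Phi> in_U by blast
    ultimately have "R (prod_encode (prod_encode (i, code_str s), prod_encode (code_str t,
        prod_encode (code_str \<sigma>, prod_encode (m1, prod_encode (m2,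
        prod_encode (code_str r, length \<sigma>))))))) \<noteq> 0"
      unfolding R_iff using length_eq_iff_code_str_bounds code_str_append by blast
    then show "\<exists>n. R (prod_encode (prod_encode (i, code_str s), n)) \<noteq> 0" ..
  next
    assume "\<exists>n. R (prod_encode (prod_encode (i, code_str s), n)) \<noteq> 0"
    then obtain t \<sigma> m1 m2 r L where "R (prod_encode (prod_encode (i, code_str s),
        prod_encode (code_str t, prod_encode (code_str \<sigma>, prod_encode (m1, prod_encode (m2,
        prod_encode (code_str r, L))))))) \<noteq> 0"
      by (metis prod_encode_cases code_str_cases)
    then show "s \<in> TF_preimage \<Phi> (U i)"
      unfolding R_iff TF_preimage_def in_\<Phi> in_U prefix_iff_code_str
        length_eq_iff_code_str_bounds[symmetric] by blast
  qed
  have "{prod_encode (i, code_str s) | i s. s \<in> TF_preimage \<Phi> (U i)}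
      = {x. \<exists>n. R (prod_encode (x, n)) \<noteq> 0}"
  proof (intro set_eqI iffI)
    fix x assume "x \<in> {x. \<exists>n. R (prod_encode (x, n)) \<noteq> 0}"
    moreover obtain i s where "x = prod_encode (i, code_str s)"
      by (metis prod_encode_cases code_str_cases)
    ultimately show "x \<in> {prod_encode (i, code_str s) | i s. s \<in> TF_preimage \<Phi> (U i)}"
      using preimage_iff by blast
  qed (use preimage_iff in blast)
  with prim_R show ?thesis
    unfolding unif_ce_def ce_nat_def by blast
qed

section \<open>Measure of pulled-back cylinders\<close>

lemma space_unif [simp]: "space unif = UNIV"
  unfolding unif_def by (simp add: space_PiM PiE_def Pi_def extensional_def)

lemma prob_space_unif: "prob_space unif"
  unfolding unif_def by (intro prob_space_PiM) (simp add: prob_space_measure_pmf)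

lemma sets_unif_sprefix: "{X. sprefix s X} \<in> sets unif"
proof -
  have "Measurable.pred unif (\<lambda>X. \<forall>i\<in>{..<length s}. s ! i = X i)"
    unfolding unif_def by measurable
  moreover have "{X. sprefix s X} = {X. \<forall>i\<in>{..<length s}. s ! i = X i}"
    unfolding sprefix_def by auto
  ultimately show ?thesis
    unfolding pred_def by simp
qed

lemma sets_unif_cyl: "cyl S \<in> sets unif"
proof -
  have "cyl S = (\<Union>s\<in>S. {X. sprefix s X})"
    unfolding cyl_def by auto
  then show ?thesis
    by (simp add: sets.countable_UN'' countableI_type sets_unif_sprefix)
qed

lemma sets_unif_out_ext: "{X. out_ext \<Phi> X \<sigma>} \<in> sets unif"
proof -
  have "{X. out_ext \<Phi> X \<sigma>} = (if \<sigma> = [] then UNIV else cyl {s. \<exists>t. (s, t) \<in> \<Phi> \<and> prefix \<sigma> t})"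
    unfolding out_ext_def outs_def cyl_def by auto
  then show ?thesis
    using sets.top[of unif] by (simp add: sets_unif_cyl)
qed

lemma emeasure_UN_countable_le:
  assumes I: "countable I" and A: "\<And>i. i \<in> I \<Longrightarrow> A i \<in> sets M"
  shows "emeasure M (\<Union>(A ` I)) \<le> (\<integral>\<^sup>+i. emeasure M (A i) \<partial>count_space I)"
proof -
  have indicator_le: "indicator (\<Union>(A ` I)) x \<le> (\<integral>\<^sup>+ i. indicator (A i) x \<partial>count_space I)" for x
  proof (cases "x \<in> \<Union>(A ` I)")
    case True
    then obtain j where j: "j \<in> I" "x \<in> A j" by auto
    have "(1::ennreal) = (\<integral>\<^sup>+ i. indicator {j} i \<partial>count_space I)"
      using j by simp
    also have "\<dots> \<le> (\<integral>\<^sup>+ i. indicator (A i) x \<partial>count_space I)"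
      by (intro nn_integral_mono) (auto simp: j split: split_indicator)
    finally show ?thesis using True by simp
  qed simp
  have "\<Union>(A ` I) \<in> sets M"
    using sets.countable_UN'[OF I] A by blast
  then have "emeasure M (\<Union>(A ` I)) = (\<integral>\<^sup>+x. indicator (\<Union>(A ` I)) x \<partial>M)"
    by simp
  also have "\<dots> \<le> (\<integral>\<^sup>+x. \<integral>\<^sup>+ i. indicator (A i) x \<partial>count_space I \<partial>M)"
    by (intro nn_integral_mono indicator_le)
  also have "\<dots> = (\<integral>\<^sup>+i. \<integral>\<^sup>+x. indicator (A i) x \<partial>M \<partial>count_space I)"
    using A by (intro nn_integral_count_space_nn_integral I) auto
  also have "\<dots> = (\<integral>\<^sup>+i. emeasure M (A i) \<partial>count_space I)"
    using A by (intro nn_integral_cong) auto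
  finally show ?thesis .
qed

lemma emeasure_cyl_TF_preimage_le:
  "emeasure unif (cyl (TF_preimage \<Phi> S)) \<le> rho_set (lambda_Phi \<Phi>) S"
proof -
  interpret prob_space unif by (rule prob_space_unif)
  have "cyl (TF_preimage \<Phi> S) \<subseteq> (\<Union>\<sigma>\<in>S. {X. out_ext \<Phi> X \<sigma>})"
    unfolding cyl_def TF_preimage_def out_ext_def outs_def by blast
  moreover have "(\<Union>\<sigma>\<in>S. {X. out_ext \<Phi> X \<sigma>}) \<in> sets unif"
    by (intro sets.countable_UN'' countableI_type sets_unif_out_ext)
  ultimately have "emeasure unif (cyl (TF_preimage \<Phi> S)) \<le> emeasure unif (\<Union>\<sigma>\<in>S. {X. out_ext \<Phi> X \<sigma>})"
    by (rule emeasure_mono)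
  also have "\<dots> \<le> (\<integral>\<^sup>+\<sigma>. emeasure unif {X. out_ext \<Phi> X \<sigma>} \<partial>count_space S)"
    by (intro emeasure_UN_countable_le countableI_type sets_unif_out_ext)
  also have "\<dots> = rho_set (lambda_Phi \<Phi>) S"
    unfolding rho_set_def lambda_Phi_def by (simp add: emeasure_eq_measure)
  finally show ?thesis .
qed

lemma measure_cyl_TF_preimage_tendsto_0:
  assumes "(\<lambda>i. rho_set (lambda_Phi \<Phi>) (U i)) \<longlonglongrightarrow> 0"
  shows "(\<lambda>i. measure unif (cyl (TF_preimage \<Phi> (U i)))) \<longlonglongrightarrow> 0"
proof -
  interpret prob_space unif by (rule prob_space_unif)
  have "(\<lambda>i. ennreal (measure unif (cyl (TF_preimage \<Phi> (U i))))) \<longlonglongrightarrow> 0"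
  proof (rule tendsto_sandwich[OF _ _ tendsto_const assms])
    show "\<forall>\<^sub>F i in sequentially. ennreal (measure unif (cyl (TF_preimage \<Phi> (U i))))
        \<le> rho_set (lambda_Phi \<Phi>) (U i)"
      using emeasure_cyl_TF_preimage_le by (simp add: emeasure_eq_measure)
  qed simp
  then have "(\<lambda>i. ennreal (measure unif (cyl (TF_preimage \<Phi> (U i))))) \<longlonglongrightarrow> ennreal 0"
    by simp
  then show ?thesis
    by (subst (asm) tendsto_ennreal_iff) auto
qed

lemma sprefix_imp_prefix:
  assumes "sprefix a Y" "sprefix b Y" "length a \<le> length b"
  shows "prefix a b"
proof -
  have "a = take (length a) b"
    using assms unfolding sprefix_def by (intro nth_equalityI) auto
  then show ?thesis by (metis take_is_prefix)
qed

lemma outs_chain: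
  assumes TF: "turing_functional \<Phi>" and t: "t \<in> outs \<Phi> X" and t': "t' \<in> outs \<Phi> X"
  shows "prefix t t' \<or> prefix t' t"
proof (cases "t = [] \<or> t' = []")
  case False
  then obtain s s' where ss: "(s, t) \<in> \<Phi>" "sprefix s X" "(s', t') \<in> \<Phi>" "sprefix s' X"
    using t t' unfolding outs_def by auto
  then have "prefix s s' \<or> prefix s' s"
    using sprefix_imp_prefix[of s X s'] sprefix_imp_prefix[of s' X s] by linarith
  then show ?thesis
    using TF ss unfolding turing_functional_def by blast
qed auto

lemma sprefix_apply_TF:
  assumes TF: "turing_functional \<Phi>" and D: "X \<in> dom_TF \<Phi>" and t: "t \<in> outs \<Phi> X"
  shows "sprefix t (apply_TF \<Phi> X)"
proof -
  have "\<forall>i. \<exists>t. t \<in> outs \<Phi> X \<and> i < length t"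
    using D unfolding dom_TF_def Suc_le_eq[symmetric] by blast
  then obtain T where T: "\<forall>i. T i \<in> outs \<Phi> X \<and> i < length (T i)"
    by (rule choice[THEN exE])
  have same_bits: "i < length a \<Longrightarrow> i < length b \<Longrightarrow> a ! i = b ! i"
    if "a \<in> outs \<Phi> X" "b \<in> outs \<Phi> X" for a b i
    using outs_chain[OF TF that] by (auto simp: prefix_def nth_append)
  have "\<forall>t\<in>outs \<Phi> X. sprefix t (\<lambda>i. T i ! i)"
    unfolding sprefix_def using T same_bits by blast
  then have "\<forall>t\<in>outs \<Phi> X. sprefix t (apply_TF \<Phi> X)"
    unfolding apply_TF_def by (rule someI[where P = "\<lambda>Y. \<forall>t\<in>outs \<Phi> X. sprefix t Y"])
  with t show ?thesis by blast
qed

lemma cyl_TF_preimage_if_apply_TF_in_cyl: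
  assumes TF: "turing_functional \<Phi>" and D: "X \<in> dom_TF \<Phi>" and Y: "apply_TF \<Phi> X \<in> cyl S"
  shows "X \<in> cyl (TF_preimage \<Phi> S)"
proof -
  obtain \<sigma> where \<sigma>: "\<sigma> \<in> S" "sprefix \<sigma> (apply_TF \<Phi> X)"
    using Y unfolding cyl_def by blast
  obtain t where t: "t \<in> outs \<Phi> X" "length \<sigma> < length t"
    using D unfolding dom_TF_def Suc_le_eq[symmetric] by blast
  then obtain s where "(s, t) \<in> \<Phi>" "sprefix s X"
    unfolding outs_def by auto
  moreover have "prefix \<sigma> t"
    using sprefix_imp_prefix[OF \<sigma>(2) sprefix_apply_TF[OF TF D t(1)]] t(2) by simp
  ultimately show ?thesis
    unfolding cyl_def TF_preimage_def using \<sigma>(1) by blast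
qed

theorem theorem5p9:
  fixes \<rho> :: "str \<Rightarrow> real" and \<Phi> :: "(str \<times> str) set"
  assumes "semimeasure \<rho>" and "left_ce \<rho>"
    and "turing_functional \<Phi>"
    and "\<forall>s. lambda_Phi \<Phi> s = \<rho> s"
  shows "\<forall>X \<in> W2R \<inter> dom_TF \<Phi>. apply_TF \<Phi> X \<in> W2R_rho \<rho>"
proof (intro ballI, unfold W2R_rho_def, intro CollectI allI impI notI)
  fix X U
  assume X: "X \<in> W2R \<inter> dom_TF \<Phi>"
    and test: "unif_ce U \<and> (\<lambda>i. rho_set \<rho> (U i)) \<longlonglongrightarrow> 0"
    and Y: "apply_TF \<Phi> X \<in> (\<Inter>i. cyl (U i))"
  have \<rho>: "\<rho> = lambda_Phi \<Phi>"
    using assms(4) by auto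
  have "unif_ce (\<lambda>i. TF_preimage \<Phi> (U i))"
    using unif_ce_TF_preimage test assms(3) unfolding turing_functional_def by blast
  moreover have "(\<lambda>i. measure unif (cyl (TF_preimage \<Phi> (U i)))) \<longlonglongrightarrow> 0"
    using measure_cyl_TF_preimage_tendsto_0 test unfolding \<rho> by blast
  moreover have "X \<in> (\<Inter>i. cyl (TF_preimage \<Phi> (U i)))"
    using cyl_TF_preimage_if_apply_TF_in_cyl assms(3) X Y by blast
  ultimately show False
    using X unfolding W2R_def by blast
qed

end
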